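(* Let $\Gamma$ be a determined pointclass on $C^\omega$. Let $\langle\{a,b\},C,d,O,v,(\prec_a,\prec_b)\rangle$ be a two-player infinite sequential game with $O=\{y,x_1,\dots,x_n\}$ ($n\ge1$, all distinct), in which every outcome is realizable, $v$ is $\Gamma$-measurable, and the preferences are the linear orders $y\prec_a x_1\prec_a\cdots\prec_a x_n$ and $y\prec_b x_n\prec_b\cdots\prec_b x_1$. Then the game has a Pareto-optimal Nash equilibrium.
   Context: $C$ is a non-empty set of choices, $d:C^*\to\{a,b\}$ the chooser after each history, $v:C^\omega\to O$. A strategy of $X$ is a function $s:d^{-1}(\{X\})\to C$; a profile is identified with $\sigma:C^*\to C$, inducing the play $p(\sigma)$ with $p_n=\sigma(p_{<n})$. $\sigma$ is a Nash equilibrium if no player $X$ has a strategy $s$ with $v(p(\sigma))\prec_X v(p(\sigma_{X\mapsto s}))$ ($\sigma_{X\mapsto s}$ agrees with $s$ on $d^{-1}(\{X\})$, with $\sigma$ elsewhere). An outcome is realizable if it equals $v(p)$ for some $p\in C^\omega$. An outcome $o$ is Pareto-optimal if there is no realizable outcome $q$ such that $o\prec_X q$ for some player $X$ and $q\prec_Y o$ for no player $Y$; a Nash equilibrium is Pareto-optimal if its induced outcome is. A pointclass $\Gamma$ is a collection of subsets of $C^\omega$ closed under continuous preimages; it is determined if for every $W\in\Gamma$ and $D\subseteq C^*$ the win-lose game $\langle C,D,W\rangle$ (first player chooses after histories in $D$, second after the others, first player wins iff the play is in $W$) has a winning strategy for one of the players. $v$ is $\Gamma$-measurable if $v^{-1}[Q]\in\Gamma$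 for all $Q\subseteq O$. *)

theory Defs
  imports Main
begin

datatype player = PA | PB

text \<open>Choices are the elements of the type 'c (the nonempty set C); histories are
  lists, plays are functions nat => 'c.  A profile is a function on all histories.\<close>

fun hist :: "('c list \<Rightarrow> 'c) \<Rightarrow> nat \<Rightarrow> 'c list" where
  "hist \<sigma> 0 = []"
| "hist \<sigma> (Suc k) = hist \<sigma> k @ [\<sigma> (hist \<sigma> k)]"

definition play :: "('c list \<Rightarrow> 'c) \<Rightarrow> nat \<Rightarrow> 'c" where
  "play \<sigma> k = \<sigma> (hist \<sigma> k)"

text \<open>Continuity on C^omega (product of discrete topologies).\<close>
definition cont_seq :: "((nat \<Rightarrow> 'c) \<Rightarrow> (nat \<Rightarrow> 'c)) \<Rightarrow> bool" where
  "cont_seq f \<longleftrightarrow> (\<forall>p k. \<exists>m. \<forall>q. (\<forall>i<m. q i = p i) \<longrightarrow> f q k = f p k)"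

definition pointclass :: "(nat \<Rightarrow> 'c) set set \<Rightarrow> bool" where
  "pointclass \<Gamma> \<longleftrightarrow> (\<forall>W\<in>\<Gamma>. \<forall>f. cont_seq f \<longrightarrow> f -` W \<in> \<Gamma>)"

text \<open>Win-lose game <C,D,W>: first player moves after histories in D.\<close>
definition wl_profile :: "'c list set \<Rightarrow> ('c list \<Rightarrow> 'c) \<Rightarrow> ('c list \<Rightarrow> 'c) \<Rightarrow> 'c list \<Rightarrow> 'c" where
  "wl_profile D s t = (\<lambda>h. if h \<in> D then s h else t h)"

definition determined :: "(nat \<Rightarrow> 'c) set set \<Rightarrow> bool" where
  "determined \<Gamma> \<longleftrightarrow> (\<forall>W\<in>\<Gamma>. \<forall>D.
      (\<exists>s. \<forall>t. play (wl_profile D s t) \<in> W) \<or> (\<exists>t. \<forall>s. play (wl_profile D s t) \<notin> W))"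

definition measurable_in :: "(nat \<Rightarrow> 'c) set set \<Rightarrow> ((nat \<Rightarrow> 'c) \<Rightarrow> 'o) \<Rightarrow> bool" where
  "measurable_in \<Gamma> v \<longleftrightarrow> (\<forall>Q. v -` Q \<in> \<Gamma>)"

definition deviate :: "('c list \<Rightarrow> player) \<Rightarrow> ('c list \<Rightarrow> 'c) \<Rightarrow> player \<Rightarrow> ('c list \<Rightarrow> 'c) \<Rightarrow> 'c list \<Rightarrow> 'c" where
  "deviate d \<sigma> X s = (\<lambda>h. if d h = X then s h else \<sigma> h)"

definition nash :: "('c list \<Rightarrow> player) \<Rightarrow> ((nat \<Rightarrow> 'c) \<Rightarrow> 'o) \<Rightarrow> (player \<Rightarrow> 'o \<Rightarrow> 'o \<Rightarrow> bool)
    \<Rightarrow> ('c list \<Rightarrow> 'c) \<Rightarrow> bool" where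
  "nash d v pref \<sigma> \<longleftrightarrow> (\<forall>X s. \<not> pref X (v (play \<sigma>)) (v (play (deviate d \<sigma> X s))))"

definition realizable :: "((nat \<Rightarrow> 'c) \<Rightarrow> 'o) \<Rightarrow> 'o \<Rightarrow> bool" where
  "realizable v out \<longleftrightarrow> (\<exists>p. v p = out)"

definition pareto_optimal :: "((nat \<Rightarrow> 'c) \<Rightarrow> 'o) \<Rightarrow> (player \<Rightarrow> 'o \<Rightarrow> 'o \<Rightarrow> bool) \<Rightarrow> 'o \<Rightarrow> bool" where
  "pareto_optimal v pref out \<longleftrightarrow>
     \<not> (\<exists>q. realizable v q \<and> (\<exists>X. pref X out q) \<and> (\<forall>Y. \<not> pref Y q out))"

end

theory Submission
  imports Defs
begin

text \<open>Take a play \<open>p\<close> with outcome \<open>x 1\<close>. As long as both players can be held to the common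
  worst outcome \<open>y\<close>, every deviation from \<open>p\<close> can be punished; if this holds along all of \<open>p\<close>,
  then \<open>p\<close> is the play of a Nash equilibrium. Otherwise, at the first history where some player
  \<open>Z\<close> cannot be held to \<open>y\<close>, determinacy lets \<open>Z\<close> force an outcome other than \<open>y\<close>. From there,
  ranking \<open>x\<^sub>1, \<dots>, x\<^sub>n\<close> as \<open>Z\<close> does (the opponent ranks them in reverse), the largest rank \<open>i\<close>
  that \<open>Z\<close> can force is, again by determinacy, also the largest the opponent can be held to;
  playing the two forcing strategies gives an equilibrium with outcome of rank \<open>i\<close>.
  Since the players order \<open>x\<^sub>1, \<dots>, x\<^sub>n\<close> oppositely, every such outcome is Pareto-optimal.\<close>

definition init_seg :: "(nat \<Rightarrow> 'c) \<Rightarrow> nat \<Rightarrow> 'c list" where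
  "init_seg p k = map p [0..<k]"

definition prepend :: "'c list \<Rightarrow> (nat \<Rightarrow> 'c) \<Rightarrow> nat \<Rightarrow> 'c" where
  "prepend h q = (\<lambda>k. if k < length h then h ! k else q (k - length h))"

lemma length_init_seg [simp]: "length (init_seg p k) = k"
  by (simp add: init_seg_def)

lemma init_seg_0 [simp]: "init_seg p 0 = []"
  by (simp add: init_seg_def)

lemma init_seg_Suc: "init_seg p (Suc k) = init_seg p k @ [p k]"
  by (simp add: init_seg_def)

lemma nth_init_seg: "j < k \<Longrightarrow> init_seg p k ! j = p j"
  by (simp add: init_seg_def)

lemma take_init_seg: "k \<le> m \<Longrightarrow> take k (init_seg p m) = init_seg p k"
  by (simp add: init_seg_def take_map)

lemma init_seg_cong: "(\<And>j. j < k \<Longrightarrow> p j = q j) \<Longrightarrow> init_seg p k = init_seg q k"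
  by (simp add: init_seg_def)

lemma init_seg_prepend:
  "init_seg (prepend h q) k = (if k \<le> length h then take k h else h @ init_seg q (k - length h))"
  by (auto simp: init_seg_def prepend_def nth_append intro!: nth_equalityI)

lemma prepend_prepend: "prepend h (prepend h' q) = prepend (h @ h') q"
  by (auto simp: prepend_def nth_append fun_eq_iff)

lemma cont_seq_prepend: "cont_seq (prepend h)"
  unfolding cont_seq_def prepend_def by (metis diff_le_self le_imp_less_Suc)

lemma hist_eq_init_seg: "hist \<sigma> k = init_seg (play \<sigma>) k"
  by (induction k) (auto simp: init_seg_Suc play_def)

lemma play_eq_at_init_seg: "play \<sigma> k = \<sigma> (init_seg (play \<sigma>) k)"
  by (simp add: play_def hist_eq_init_seg)

lemma hist_append:
  assumes "hist \<sigma> (length h) = h"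
  shows "hist \<sigma> (length h + k) = h @ hist (\<lambda>l. \<sigma> (h @ l)) k"
  by (induction k) (auto simp: assms)

lemma play_eq_prepend_subgame:
  assumes "init_seg (play \<sigma>) (length h) = h"
  shows "play \<sigma> = prepend h (play (\<lambda>l. \<sigma> (h @ l)))"
proof
  fix k
  have hist_h: "hist \<sigma> (length h) = h"
    using assms by (simp add: hist_eq_init_seg)
  show "play \<sigma> k = prepend h (play (\<lambda>l. \<sigma> (h @ l))) k"
  proof (cases "k < length h")
    case True
    then show ?thesis
      using nth_init_seg[OF True, of "play \<sigma>"] by (simp add: assms prepend_def)
  next
    case False
    then obtain m where k: "k = length h + m"
      using le_Suc_ex not_less by blast
    show ?thesis
      using hist_append[OF hist_h, of m] by (simp add: play_def prepend_def k)
  qed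
qed

fun other :: "player \<Rightarrow> player" where
  "other PA = PB"
| "other PB = PA"

lemma other_neq [simp]: "other X \<noteq> X" "X \<noteq> other X"
  by (cases X; simp)+

lemma neq_iff_other: "Z \<noteq> X \<longleftrightarrow> Z = other X"
  by (cases Z; cases X) auto

lemma other_other [simp]: "other (other X) = X"
  by (cases X) auto

text \<open>\<open>f\<close> is a strategy of the opponent of \<open>Z\<close> in the subgame after \<open>h\<close>; it keeps the outcome
  in \<open>Q\<close> whatever \<open>Z\<close> plays.\<close>
definition confines ::
    "('c list \<Rightarrow> player) \<Rightarrow> ((nat \<Rightarrow> 'c) \<Rightarrow> 'o) \<Rightarrow> player \<Rightarrow> 'c list \<Rightarrow> 'o set \<Rightarrow> ('c list \<Rightarrow> 'c) \<Rightarrow> bool"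
  where "confines d v Z h Q f \<longleftrightarrow>
    (\<forall>g. v (prepend h (play (\<lambda>l. if d (h @ l) = Z then g l else f l))) \<in> Q)"

definition both_confined :: "('c list \<Rightarrow> player) \<Rightarrow> ((nat \<Rightarrow> 'c) \<Rightarrow> 'o) \<Rightarrow> 'c list \<Rightarrow> 'o set \<Rightarrow> bool"
  where "both_confined d v h Q \<longleftrightarrow> (\<forall>Z. \<exists>f. confines d v Z h Q f)"

lemma confines_determined:
  assumes "pointclass \<Gamma>" "determined \<Gamma>" "measurable_in \<Gamma> v"
  shows "(\<exists>f. confines d v Z h Q f) \<or> (\<exists>f. confines d v (other Z) h (- Q) f)"
proof -
  let ?D = "{l. d (h @ l) = other Z}"
  have "prepend h -` v -` Q \<in> \<Gamma>"
    using assms cont_seq_prepend unfolding pointclass_def measurable_in_def by blast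
  then have "(\<exists>f. \<forall>g. play (wl_profile ?D f g) \<in> prepend h -` v -` Q) \<or>
      (\<exists>g. \<forall>f. play (wl_profile ?D f g) \<notin> prepend h -` v -` Q)"
    using assms(2) unfolding determined_def by blast
  moreover have "wl_profile ?D f g = (\<lambda>l. if d (h @ l) = Z then g l else f l)"
    and "wl_profile ?D f g = (\<lambda>l. if d (h @ l) = other Z then f l else g l)" for f g
    by (auto simp: wl_profile_def fun_eq_iff neq_iff_other)
  ultimately show ?thesis
    unfolding confines_def by auto
qed

lemma confines_mono:
  "confines d v Z h Q f \<Longrightarrow> (\<And>w. w \<in> Q \<Longrightarrow> w \<in> range v \<Longrightarrow> w \<in> Q') \<Longrightarrow> confines d v Z h Q' f"
  unfolding confines_def by blast

lemma confines_realizable: "confines d v Z h Q f \<Longrightarrow> \<exists>p. v p \<in> Q"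
  unfolding confines_def by blast

lemma confines_snoc:
  assumes "confines d v Z h Q f" and "d h = Z \<or> c = f []"
  shows "confines d v Z (h @ [c]) Q (\<lambda>l. f (c # l))"
  unfolding confines_def
proof
  fix g'
  define \<pi> where "\<pi> = (\<lambda>l. if d (h @ l) = Z then (case l of [] \<Rightarrow> c | _ # l' \<Rightarrow> g' l') else f l)"
  have "\<pi> [] = c"
    using assms(2) by (auto simp: \<pi>_def)
  then have "play \<pi> = prepend [c] (play (\<lambda>l. \<pi> ([c] @ l)))"
    by (intro play_eq_prepend_subgame) (simp add: init_seg_Suc play_eq_at_init_seg)
  moreover have "(\<lambda>l. \<pi> ([c] @ l)) = (\<lambda>l. if d ((h @ [c]) @ l) = Z then g' l else f (c # l))"
    by (auto simp: \<pi>_def fun_eq_iff)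
  moreover have "v (prepend h (play \<pi>)) \<in> Q"
    using assms(1) unfolding confines_def \<pi>_def by blast
  ultimately show "v (prepend (h @ [c]) (play (\<lambda>l. if d ((h @ [c]) @ l) = Z then g' l else f (c # l)))) \<in> Q"
    by (simp add: prepend_prepend)
qed

lemma confines_along:
  assumes "confines d v Z h Q f" "\<pi> = (\<lambda>l. if d (h @ l) = Z then g l else f l)"
  shows "confines d v Z (h @ init_seg (play \<pi>) m) Q (\<lambda>l. f (init_seg (play \<pi>) m @ l))"
proof (induction m)
  case 0
  then show ?case using assms(1) by simp
next
  case (Suc m)
  have "d (h @ init_seg (play \<pi>) m) = Z \<or> play \<pi> m = f (init_seg (play \<pi>) m @ [])"
    using assms(2) play_eq_at_init_seg[of \<pi> m] by auto
  from confines_snoc[OF Suc this] show ?case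
    by (simp add: init_seg_Suc)
qed

lemma confines_deviation_after:
  assumes "confines d v Z h Q f" "\<pi> = (\<lambda>l. if d (h @ l) = Z then g l else f l)"
    and "length h \<le> k" and "d (init_seg (prepend h (play \<pi>)) k) = Z"
  shows "\<exists>f'. confines d v Z (init_seg (prepend h (play \<pi>)) k @ [c]) Q f'"
proof -
  define m where "m = k - length h"
  have "init_seg (prepend h (play \<pi>)) k = h @ init_seg (play \<pi>) m"
    using assms(3) by (auto simp: init_seg_prepend m_def)
  then show ?thesis
    using confines_snoc[OF confines_along[OF assms(1,2), of m], of c] assms(4) by auto
qed

lemma both_confined_punishes_deviation:
  assumes "both_confined d v h Q" and "\<And>Z u w. w \<in> Q \<Longrightarrow> \<not> pref Z u w"
  shows "\<exists>f. confines d v (d h) (h @ [c]) {w. \<not> pref (d h) u w} f"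
proof -
  obtain f where "confines d v (d h) (h @ [c]) Q f"
    using assms(1) confines_snoc[of d v "d h" h Q _ c] unfolding both_confined_def by blast
  then have "confines d v (d h) (h @ [c]) {w. \<not> pref (d h) u w} f"
    by (rule confines_mono) (use assms(2) in blast)
  then show ?thesis
    by blast
qed

lemma confines_outcome:
  assumes "confines d v Z h Q f" "init_seg (play \<tau>) (length h) = h"
    and "\<And>l. d (h @ l) \<noteq> Z \<Longrightarrow> \<tau> (h @ l) = f l"
  shows "v (play \<tau>) \<in> Q"
proof -
  have "(\<lambda>l. \<tau> (h @ l)) = (\<lambda>l. if d (h @ l) = Z then \<tau> (h @ l) else f l)"
    using assms(3) by auto
  then show ?thesis
    using assms(1) play_eq_prepend_subgame[OF assms(2)] unfolding confines_def by metis
qed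

lemma forcing_after_confined_prefix:
  assumes "pointclass \<Gamma>" "determined \<Gamma>" "measurable_in \<Gamma> v"
    and "\<not> (\<forall>k. both_confined d v (init_seg p k) Q)"
  obtains h Z f where "\<And>k. k < length h \<Longrightarrow> both_confined d v (take k h) Q"
    and "confines d v (other Z) h (- Q) f"
proof -
  obtain k0 where k0: "\<not> both_confined d v (init_seg p k0) Q"
    and before: "\<And>k. k < k0 \<Longrightarrow> both_confined d v (init_seg p k) Q"
    using assms(4) exists_least_iff[of "\<lambda>k. \<not> both_confined d v (init_seg p k) Q"] by auto
  obtain Z where "\<nexists>f. confines d v Z (init_seg p k0) Q f"
    using k0 unfolding both_confined_def by blast
  then obtain f where "confines d v (other Z) (init_seg p k0) (- Q) f"
    using confines_determined[OF assms(1-3)] by blast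
  moreover have "both_confined d v (take k (init_seg p k0)) Q" if "k < length (init_seg p k0)" for k
    using before that by (simp add: take_init_seg)
  ultimately show ?thesis
    using that by blast
qed

definition enforceable ::
    "('c list \<Rightarrow> player) \<Rightarrow> ((nat \<Rightarrow> 'c) \<Rightarrow> 'o) \<Rightarrow> (player \<Rightarrow> 'o \<Rightarrow> 'o \<Rightarrow> bool) \<Rightarrow> (nat \<Rightarrow> 'c) \<Rightarrow> bool"
  where "enforceable d v pref p \<longleftrightarrow> (\<forall>k c. c \<noteq> p k \<longrightarrow>
    (\<exists>f. confines d v (d (init_seg p k)) (init_seg p k @ [c]) {w. \<not> pref (d (init_seg p k)) (v p) w} f))"

lemma enforceable_if_both_confined:
  assumes "\<And>k. both_confined d v (init_seg p k) Q" and "\<And>Z u w. w \<in> Q \<Longrightarrow> \<not> pref Z u w"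
  shows "enforceable d v pref p"
  unfolding enforceable_def
proof (intro allI impI)
  fix k c
  show "\<exists>f. confines d v (d (init_seg p k)) (init_seg p k @ [c]) {w. \<not> pref (d (init_seg p k)) (v p) w} f"
    by (rule both_confined_punishes_deviation[OF assms(1)]) (use assms(2) in blast)
qed

definition enforcing_profile :: "(nat \<Rightarrow> 'c) \<Rightarrow> (nat \<Rightarrow> 'c \<Rightarrow> 'c list \<Rightarrow> 'c) \<Rightarrow> 'c list \<Rightarrow> 'c" where
  "enforcing_profile p F l = (if l = init_seg p (length l) then p (length l)
     else let k = (LEAST k. k < length l \<and> l ! k \<noteq> p k) in F k (l ! k) (drop (Suc k) l))"

lemma enforcing_profile_on_path: "enforcing_profile p F (init_seg p k) = p k"
  by (simp add: enforcing_profile_def)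

lemma play_enforcing_profile: "play (enforcing_profile p F) = p"
proof -
  have init: "init_seg (play (enforcing_profile p F)) k = init_seg p k" for k
  proof (induction k)
    case (Suc k)
    then show ?case
      using play_eq_at_init_seg[of "enforcing_profile p F" k]
      by (simp add: init_seg_Suc enforcing_profile_on_path)
  qed simp
  show ?thesis
  proof
    fix k
    show "play (enforcing_profile p F) k = p k"
      using play_eq_at_init_seg[of "enforcing_profile p F" k] by (simp add: init enforcing_profile_on_path)
  qed
qed

lemma enforcing_profile_after_deviation:
  assumes "c \<noteq> p k"
  shows "enforcing_profile p F (init_seg p k @ c # l) = F k c l"
proof -
  let ?h = "init_seg p k @ c # l"
  have "?h ! k = c"
    by (simp add: nth_append)
  then have off_path: "?h \<noteq> init_seg p (length ?h)"
    using assms nth_init_seg[of k "length ?h" p] by auto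
  have "(LEAST j. j < length ?h \<and> ?h ! j \<noteq> p j) = k"
  proof (rule Least_equality)
    show "k < length ?h \<and> ?h ! k \<noteq> p k"
      using \<open>?h ! k = c\<close> assms by simp
  next
    fix j
    assume "j < length ?h \<and> ?h ! j \<noteq> p j"
    then show "k \<le> j"
      using nth_init_seg[of j k p] by (cases "j < k") (auto simp: nth_append)
  qed
  then show ?thesis
    using off_path \<open>?h ! k = c\<close> by (simp add: enforcing_profile_def Let_def)
qed

lemma first_deviation:
  assumes "q \<noteq> p"
  obtains k where "q k \<noteq> p k" "init_seg q k = init_seg p k"
proof -
  obtain k where "q k \<noteq> p k" "\<And>j. j < k \<Longrightarrow> q j = p j"
    using assms exists_least_iff[of "\<lambda>k. q k \<noteq> p k"] by (auto simp: fun_eq_iff)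
  then show ?thesis
    using that init_seg_cong by blast
qed

text \<open>Only the first deviation matters: the deviator is then confined to outcomes it does not prefer.\<close>
lemma nash_if_enforceable:
  assumes irrefl: "\<And>Z u. \<not> pref Z u u" and "enforceable d v pref p"
  shows "\<exists>\<sigma>. play \<sigma> = p \<and> nash d v pref \<sigma>"
proof -
  define F where "F = (\<lambda>k c. SOME f. confines d v (d (init_seg p k)) (init_seg p k @ [c])
    {w. \<not> pref (d (init_seg p k)) (v p) w} f)"
  have F: "confines d v (d (init_seg p k)) (init_seg p k @ [c]) {w. \<not> pref (d (init_seg p k)) (v p) w} (F k c)"
    if "c \<noteq> p k" for k c
    using assms(2) that unfolding enforceable_def F_def by (metis someI_ex)
  define \<sigma> where "\<sigma> = enforcing_profile p F"
  have "v (play (deviate d \<sigma> X s)) \<in> {w. \<not> pref X (v p) w}" for X s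
  proof (cases "play (deviate d \<sigma> X s) = p")
    case True
    then show ?thesis using irrefl by simp
  next
    case False
    let ?\<tau> = "deviate d \<sigma> X s"
    obtain k where k: "play ?\<tau> k \<noteq> p k" "init_seg (play ?\<tau>) k = init_seg p k"
      using first_deviation[OF False] .
    define c where "c = play ?\<tau> k"
    have "?\<tau> (init_seg p k) \<noteq> \<sigma> (init_seg p k)"
      using k play_eq_at_init_seg[of ?\<tau> k]
      by (simp add: c_def \<sigma>_def enforcing_profile_on_path)
    then have deviator: "d (init_seg p k) = X"
      by (auto simp: deviate_def split: if_splits)
    show ?thesis
    proof (rule confines_outcome)
      show "confines d v X (init_seg p k @ [c]) {w. \<not> pref X (v p) w} (F k c)"
        using F[of c k] k(1) deviator by (simp add: c_def)
      show "init_seg (play ?\<tau>) (length (init_seg p k @ [c])) = init_seg p k @ [c]"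
        using k(2) by (simp add: init_seg_Suc c_def)
      show "?\<tau> ((init_seg p k @ [c]) @ l) = F k c l" if "d ((init_seg p k @ [c]) @ l) \<noteq> X" for l
        using that enforcing_profile_after_deviation[of c p k F l] k(1)
        by (simp add: deviate_def \<sigma>_def c_def)
    qed
  qed
  then show ?thesis
    using play_enforcing_profile[of p F] unfolding nash_def \<sigma>_def by auto
qed

text \<open>Take \<open>i\<close> maximal among the ranks \<open>X\<close> can force; determinacy at \<open>i + 1\<close> lets the opponent
  force rank at most \<open>i\<close>.\<close>
lemma rank_forced_from_both_sides:
  fixes r :: "'o \<Rightarrow> nat"
  assumes \<Gamma>: "pointclass \<Gamma>" "determined \<Gamma>" "measurable_in \<Gamma> v"
    and rank_le: "\<And>p. r (v p) \<le> n"
    and start: "confines d v (other X) hh {w. 0 < r w} f"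
  obtains i s t where "0 < i" "confines d v (other X) hh {w. i \<le> r w} s"
    "confines d v X hh {w. r w \<le> i} t"
proof -
  define S where "S = (\<lambda>i. \<exists>f. confines d v (other X) hh {w. i \<le> r w} f)"
  have S_1: "S 1"
    using start unfolding S_def by (auto simp: Suc_le_eq)
  have S_le: "j \<le> n" if "S j" for j
  proof -
    obtain p where "j \<le> r (v p)"
      using \<open>S j\<close> unfolding S_def by (blast dest: confines_realizable)
    then show ?thesis
      using rank_le order_trans by blast
  qed
  define i where "i = (GREATEST i. S i)"
  have "S i"
    unfolding i_def using S_1 S_le by (rule GreatestI_nat)
  have "0 < i"
    using Greatest_le_nat[of S 1 n, OF S_1 S_le] unfolding i_def by simp
  have "\<not> S (Suc i)"
    using Greatest_le_nat[of S "Suc i" n, OF _ S_le] unfolding i_def by auto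
  then obtain t where "confines d v X hh (- {w. Suc i \<le> r w}) t"
    using confines_determined[OF \<Gamma>, of d "other X" hh "{w. Suc i \<le> r w}"] unfolding S_def by auto
  then have "confines d v X hh {w. r w \<le> i} t"
    by (rule confines_mono) simp
  then show ?thesis
    using that \<open>0 < i\<close> \<open>S i\<close> unfolding S_def by blast
qed

text \<open>The two strategies give a play of rank exactly \<open>i\<close>; a player deviating after \<open>hh\<close> is still
  held to its side of \<open>i\<close>, where it finds nothing it prefers.\<close>
lemma enforceable_play_of_ranking:
  fixes r :: "'o \<Rightarrow> nat"
  assumes rank_X: "\<And>u w. pref X u w \<Longrightarrow> r u < r w"
    and rank_other: "\<And>u w. pref (other X) u w \<Longrightarrow> 0 < r u \<Longrightarrow> r w < r u"
    and bottom: "\<And>Z u w. w \<in> Q \<Longrightarrow> \<not> pref Z u w"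
    and before: "\<And>k. k < length hh \<Longrightarrow> both_confined d v (take k hh) Q"
    and "0 < i"
    and s: "confines d v (other X) hh {w. i \<le> r w} s"
    and t: "confines d v X hh {w. r w \<le> i} t"
  shows "\<exists>p. r (v p) = i \<and> enforceable d v pref p"
proof -
  define \<pi> where "\<pi> = (\<lambda>l. if d (hh @ l) = X then s l else t l)"
  have \<pi>_other: "\<pi> = (\<lambda>l. if d (hh @ l) = other X then t l else s l)"
    by (auto simp: \<pi>_def fun_eq_iff neq_iff_other)
  define p where "p = prepend hh (play \<pi>)"
  have "r (v p) \<le> i"
    using t unfolding confines_def \<pi>_def p_def by blast
  moreover have "i \<le> r (v p)"
    using s unfolding confines_def \<pi>_other p_def by blast
  ultimately have r_p: "r (v p) = i"
    by simp
  have "\<exists>f. confines d v (d (init_seg p k)) (init_seg p k @ [c]) {w. \<not> pref (d (init_seg p k)) (v p) w} f"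
    for k c
  proof (cases "k < length hh")
    case True
    then have "init_seg p k = take k hh"
      by (simp add: p_def init_seg_prepend)
    then show ?thesis
      using both_confined_punishes_deviation[OF before[OF True]] bottom by metis
  next
    case False
    consider "d (init_seg p k) = X" | "d (init_seg p k) = other X"
      using neq_iff_other by blast
    then show ?thesis
    proof cases
      case 1
      then obtain f where "confines d v X (init_seg p k @ [c]) {w. r w \<le> i} f"
        using confines_deviation_after[OF t \<pi>_def, of k c] False unfolding p_def by auto
      then have "confines d v X (init_seg p k @ [c]) {w. \<not> pref X (v p) w} f"
        by (rule confines_mono) (auto dest!: rank_X simp: r_p)
      then show ?thesis
        using 1 by auto
    next
      case 2
      then obtain f where "confines d v (other X) (init_seg p k @ [c]) {w. i \<le> r w} f"
        using confines_deviation_after[OF s \<pi>_other, of k c] False unfolding p_def by auto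
      then have "confines d v (other X) (init_seg p k @ [c]) {w. \<not> pref (other X) (v p) w} f"
        by (rule confines_mono) (use \<open>0 < i\<close> in \<open>auto dest!: rank_other simp: r_p\<close>)
      then show ?thesis
        using 2 by auto
    qed
  qed
  then show ?thesis
    using r_p unfolding enforceable_def by blast
qed

locale chain_preferences =
  fixes pref :: "player \<Rightarrow> 'o \<Rightarrow> 'o \<Rightarrow> bool" and X :: player
    and y :: 'o and x :: "nat \<Rightarrow> 'o" and n :: nat
  assumes inj_x: "inj_on x {1..n}" and y_notin: "y \<notin> x ` {1..n}"
    and pref_X: "\<And>u w. pref X u w \<longleftrightarrow>
      (u = y \<and> w \<in> x ` {1..n}) \<or> (\<exists>i j. 1 \<le> i \<and> i < j \<and> j \<le> n \<and> u = x i \<and> w = x j)"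
    and pref_other: "\<And>u w. pref (other X) u w \<longleftrightarrow>
      (u = y \<and> w \<in> x ` {1..n}) \<or> (\<exists>i j. 1 \<le> j \<and> j < i \<and> i \<le> n \<and> u = x i \<and> w = x j)"
begin

definition rank :: "'o \<Rightarrow> nat" where
  "rank w = (if w = y then 0 else inv_into {1..n} x w)"

lemma rank_y [simp]: "rank y = 0"
  by (simp add: rank_def)

lemma rank_x [simp]: "i \<in> {1..n} \<Longrightarrow> rank (x i) = i"
  using y_notin inj_x by (auto simp: rank_def)

lemma rank_le: "w \<in> insert y (x ` {1..n}) \<Longrightarrow> rank w \<le> n"
  by auto

lemma pref_X_rank: "pref X u w \<Longrightarrow> rank u < rank w"
  unfolding pref_X by auto

lemma pref_other_rank: "pref (other X) u w \<Longrightarrow> 0 < rank u \<Longrightarrow> rank w < rank u"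
  unfolding pref_other by auto

lemma pref_cases:
  assumes "pref Z u w"
  obtains (bottom) "u = y" "w \<in> x ` {1..n}"
  | (ascending) i j where "Z = X" "1 \<le> i" "i < j" "j \<le> n" "u = x i" "w = x j"
  | (descending) i j where "Z = other X" "1 \<le> j" "j < i" "i \<le> n" "u = x i" "w = x j"
proof (cases "Z = X")
  case True
  then show thesis
    using assms[unfolded True pref_X] that(1,2) by blast
next
  case False
  have "Z = other X"
    using False neq_iff_other by blast
  then show thesis
    using assms[unfolded \<open>Z = other X\<close> pref_other] that(1,3) by blast
qed

lemma not_pref_y: "\<not> pref Z u y"
  using y_notin by (auto elim: pref_cases)

lemma not_pref_refl: "\<not> pref Z u u"
proof
  assume "pref Z u u"
  then show False
  proof (cases rule: pref_cases)
    case bottom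
    then show False using y_notin by blast
  next
    case (ascending i j)
    then show False using inj_onD[OF inj_x, of i j] by auto
  next
    case (descending i j)
    then show False using inj_onD[OF inj_x, of i j] by auto
  qed
qed

lemma pareto_optimal_x:
  assumes "w \<in> x ` {1..n}"
  shows "pareto_optimal v pref w"
  unfolding pareto_optimal_def
proof (intro notI, elim exE conjE)
  fix q Z
  assume "pref Z w q" and no_better: "\<forall>Y. \<not> pref Y q w"
  then show False
  proof (cases rule: pref_cases)
    case bottom
    then show False using assms y_notin by blast
  next
    case (ascending i j)
    then have "pref (other X) q w"
      unfolding pref_other by blast
    then show False using no_better by blast
  next
    case (descending i j)
    then have "pref X q w"
      unfolding pref_X by blast
    then show False using no_better by blast
  qed
qed

lemma pareto_nash_if_enforceable:
  assumes "enforceable d v pref p" and "v p \<in> x ` {1..n}"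
  shows "\<exists>\<sigma>. nash d v pref \<sigma> \<and> pareto_optimal v pref (v (play \<sigma>))"
  using nash_if_enforceable[OF not_pref_refl assms(1)] pareto_optimal_x[OF assms(2)] by auto

lemma pareto_nash_if_confined_along:
  assumes "\<And>k. both_confined d v (init_seg p k) {y}" and "v p \<in> x ` {1..n}"
  shows "\<exists>\<sigma>. nash d v pref \<sigma> \<and> pareto_optimal v pref (v (play \<sigma>))"
proof -
  have "enforceable d v pref p"
    by (rule enforceable_if_both_confined[OF assms(1)]) (use not_pref_y in blast)
  then show ?thesis
    using assms(2) by (rule pareto_nash_if_enforceable)
qed

lemma pareto_nash_if_forcing:
  assumes \<Gamma>: "pointclass \<Gamma>" "determined \<Gamma>" "measurable_in \<Gamma> v"
    and range_v: "range v \<subseteq> insert y (x ` {1..n})"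
    and "confines d v (other X) hh (- {y}) f"
    and "\<And>k. k < length hh \<Longrightarrow> both_confined d v (take k hh) {y}"
  shows "\<exists>\<sigma>. nash d v pref \<sigma> \<and> pareto_optimal v pref (v (play \<sigma>))"
proof -
  have start: "confines d v (other X) hh {w. 0 < rank w} f"
    by (rule confines_mono[OF assms(5)]) (use range_v in auto)
  have bound: "rank (v p) \<le> n" for p
    using range_v rank_le by blast
  have bottom: "\<not> pref Z u w" if "w \<in> {y}" for Z u w
    using that not_pref_y by blast
  obtain i s t where i: "0 < i" and s: "confines d v (other X) hh {w. i \<le> rank w} s"
    and t: "confines d v X hh {w. rank w \<le> i} t"
    using rank_forced_from_both_sides[OF \<Gamma> bound start] by blast
  obtain p where "rank (v p) = i" "enforceable d v pref p"
    using enforceable_play_of_ranking[where pref = pref and Q = "{y}",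
        OF pref_X_rank pref_other_rank bottom assms(6) i s t] by blast
  moreover have "v p \<in> x ` {1..n}"
    using \<open>rank (v p) = i\<close> i range_v rank_y by (metis insert_iff less_irrefl range_subsetD)
  ultimately show ?thesis
    using pareto_nash_if_enforceable by blast
qed

end

lemma reflect_index_pairs:
  "(\<exists>i j. 1 \<le> i \<and> i < j \<and> j \<le> n \<and> P (Suc n - i) (Suc n - j)) \<longleftrightarrow>
   (\<exists>i j. 1 \<le> j \<and> j < i \<and> i \<le> n \<and> P i j)"
proof
  assume "\<exists>i j. 1 \<le> i \<and> i < j \<and> j \<le> n \<and> P (Suc n - i) (Suc n - j)"
  then obtain i j where "1 \<le> i" "i < j" "j \<le> n" "P (Suc n - i) (Suc n - j)"
    by blast
  moreover have "1 \<le> Suc n - j" "Suc n - j < Suc n - i" "Suc n - i \<le> n"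
    using \<open>1 \<le> i\<close> \<open>i < j\<close> \<open>j \<le> n\<close> by linarith+
  ultimately show "\<exists>i j. 1 \<le> j \<and> j < i \<and> i \<le> n \<and> P i j"
    by blast
next
  assume "\<exists>i j. 1 \<le> j \<and> j < i \<and> i \<le> n \<and> P i j"
  then obtain i j where "1 \<le> j" "j < i" "i \<le> n" "P i j"
    by blast
  moreover have "1 \<le> Suc n - i" "Suc n - i < Suc n - j" "Suc n - j \<le> n"
    and "Suc n - (Suc n - i) = i" "Suc n - (Suc n - j) = j"
    using \<open>1 \<le> j\<close> \<open>j < i\<close> \<open>i \<le> n\<close> by linarith+
  ultimately show "\<exists>i j. 1 \<le> i \<and> i < j \<and> j \<le> n \<and> P (Suc n - i) (Suc n - j)"
    by metis
qed

lemma image_reflect_index: "(\<lambda>i. x (Suc n - i)) ` {1..n} = x ` {1..n}"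
proof -
  have "(\<lambda>i. Suc n - i) ` {1..n} = {1..n}"
  proof (rule endo_inj_surj)
    show "inj_on (\<lambda>i. Suc n - i) {1..n}"
      by (rule inj_onI) auto
  qed auto
  then show ?thesis
    by (simp add: image_image[symmetric])
qed

lemma chain_preferences_reflect:
  assumes "chain_preferences pref X y x n"
  shows "chain_preferences pref (other X) y (\<lambda>i. x (Suc n - i)) n"
proof -
  interpret chain_preferences pref X y x n
    by (fact assms)
  show ?thesis
  proof unfold_locales
    show "inj_on (\<lambda>i. x (Suc n - i)) {1..n}"
    proof (rule inj_onI)
      fix i j
      assume "i \<in> {1..n}" "j \<in> {1..n}" "x (Suc n - i) = x (Suc n - j)"
      moreover have "Suc n - i \<in> {1..n}" "Suc n - j \<in> {1..n}"
        using \<open>i \<in> {1..n}\<close> \<open>j \<in> {1..n}\<close> by auto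
      ultimately have "Suc n - i = Suc n - j"
        using inj_onD[OF inj_x] by blast
      then show "i = j"
        using \<open>i \<in> {1..n}\<close> \<open>j \<in> {1..n}\<close> by auto
    qed
    show "y \<notin> (\<lambda>i. x (Suc n - i)) ` {1..n}"
      unfolding image_reflect_index by (fact y_notin)
    show "pref (other X) u w \<longleftrightarrow> (u = y \<and> w \<in> (\<lambda>i. x (Suc n - i)) ` {1..n}) \<or>
        (\<exists>i j. 1 \<le> i \<and> i < j \<and> j \<le> n \<and> u = x (Suc n - i) \<and> w = x (Suc n - j))" for u w
      using reflect_index_pairs[of n "\<lambda>i j. u = x i \<and> w = x j"]
      unfolding pref_other image_reflect_index by blast
    show "pref (other (other X)) u w \<longleftrightarrow> (u = y \<and> w \<in> (\<lambda>i. x (Suc n - i)) ` {1..n}) \<or>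
        (\<exists>i j. 1 \<le> j \<and> j < i \<and> i \<le> n \<and> u = x (Suc n - i) \<and> w = x (Suc n - j))" for u w
      using reflect_index_pairs[of n "\<lambda>i j. w = x i \<and> u = x j"]
      unfolding pref_X other_other image_reflect_index by blast
  qed
qed

lemma chain_preferences_any_player:
  assumes "chain_preferences pref PA y x n"
  obtains x' where "chain_preferences pref Z y x' n" "x' ` {1..n} = x ` {1..n}"
proof (cases Z)
  case PA
  then show ?thesis
    using assms that by blast
next
  case PB
  then show ?thesis
    using chain_preferences_reflect[OF assms] image_reflect_index[of x n] that by auto
qed

theorem lemma30:
  fixes \<Gamma> :: "(nat \<Rightarrow> 'c) set set"
    and d :: "'c list \<Rightarrow> player"
    and v :: "(nat \<Rightarrow> 'c) \<Rightarrow> 'o"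
    and pref :: "player \<Rightarrow> 'o \<Rightarrow> 'o \<Rightarrow> bool"
    and y :: 'o and x :: "nat \<Rightarrow> 'o" and n :: nat
  assumes "pointclass \<Gamma>" and "determined \<Gamma>"
    and "n \<ge> 1"
    and "inj_on x {1..n}" and "y \<notin> x ` {1..n}"
    and "range v = insert y (x ` {1..n})"
    and "measurable_in \<Gamma> v"
    and "\<And>u w. pref PA u w \<longleftrightarrow>
           (u = y \<and> w \<in> x ` {1..n}) \<or> (\<exists>i j. 1 \<le> i \<and> i < j \<and> j \<le> n \<and> u = x i \<and> w = x j)"
    and "\<And>u w. pref PB u w \<longleftrightarrow>
           (u = y \<and> w \<in> x ` {1..n}) \<or> (\<exists>i j. 1 \<le> j \<and> j < i \<and> i \<le> n \<and> u = x i \<and> w = x j)"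
  shows "\<exists>\<sigma>. nash d v pref \<sigma> \<and> pareto_optimal v pref (v (play \<sigma>))"
proof -
  note \<Gamma> = assms(1,2,7)
  have chain_PA: "chain_preferences pref PA y x n"
    using assms(4,5,8,9) by unfold_locales simp_all
  obtain p0 where p0: "v p0 \<in> x ` {1..n}"
    using assms(3,6) by (metis atLeastAtMost_iff image_eqI insertI2 order_refl rangeE)
  show ?thesis
  proof (cases "\<forall>k. both_confined d v (init_seg p0 k) {y}")
    case True
    then show ?thesis
      using chain_preferences.pareto_nash_if_confined_along[OF chain_PA] p0 by blast
  next
    case False
    then obtain h Z f where "\<And>k. k < length h \<Longrightarrow> both_confined d v (take k h) {y}"
      and "confines d v (other Z) h (- {y}) f"
      using forcing_after_confined_prefix[OF \<Gamma>] by blast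
    moreover obtain x' where "chain_preferences pref Z y x' n" and "x' ` {1..n} = x ` {1..n}"
      using chain_preferences_any_player[OF chain_PA] by blast
    ultimately show ?thesis
      using chain_preferences.pareto_nash_if_forcing[OF _ \<Gamma>] assms(6) by (metis order_refl)
  qed
qed

end
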